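(* Let $X$ be a Minkowski space and let $A=\{\mathbf{x}_1,\dots,\mathbf{x}_{2k+1}\}\subset X$ be a $d$-collinear set of odd size, listed in its natural order. Then $\mathrm{FT}(A)=\{\mathbf{x}_{k+1}\}$.
   Context: A Minkowski space is a finite-dimensional real normed space $(X,\|\cdot\|)$. A metric line is a subset of $X$ isometric to $\mathbb{R}$; a set is $d$-collinear if it is contained in a metric line. A finite $d$-collinear set $\{\mathbf{x}_1,\dots,\mathbf{x}_m\}$ is listed in its natural order if there is an isometry $f$ from it onto a subset of $\mathbb{R}$ with $f(\mathbf{x}_1)<\dots<f(\mathbf{x}_m)$. $\mathrm{FT}(A)$ is the set of minimizers of $\mathbf{x}\mapsto\sum_{\mathbf{a}\in A}\|\mathbf{x}-\mathbf{a}\|$. *)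

theory Defs
  imports "HOL-Analysis.Analysis"
begin

definition finite_dim_normed :: "'a::real_normed_vector itself \<Rightarrow> bool" where
  "finite_dim_normed _ \<longleftrightarrow> (\<exists>B::'a set. finite B \<and> span B = UNIV)"

definition metric_line :: "'a::real_normed_vector set \<Rightarrow> bool" where
  "metric_line L \<longleftrightarrow> (\<exists>f::real \<Rightarrow> 'a. (\<forall>s t. dist (f s) (f t) = \<bar>s - t\<bar>) \<and> range f = L)"

definition d_collinear :: "'a::real_normed_vector set \<Rightarrow> bool" where
  "d_collinear S \<longleftrightarrow> (\<exists>L. metric_line L \<and> S \<subseteq> L)"

definition natural_order :: "(nat \<Rightarrow> 'a::real_normed_vector) \<Rightarrow> nat \<Rightarrow> bool" where
  "natural_order x m \<longleftrightarrow> (\<exists>g::'a \<Rightarrow> real.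
      (\<forall>a\<in>x ` {..<m}. \<forall>b\<in>x ` {..<m}. \<bar>g a - g b\<bar> = dist a b) \<and>
      (\<forall>i j. i < j \<and> j < m \<longrightarrow> g (x i) < g (x j)))"

definition FT :: "'a::real_normed_vector set \<Rightarrow> 'a set" where
  "FT A = {y. \<forall>z. (\<Sum>a\<in>A. norm (y - a)) \<le> (\<Sum>a\<in>A. norm (z - a))}"

end

theory Submission
  imports Defs
begin

text \<open>Pair the points from the outside in: \<open>x i\<close> with \<open>x (2k - i)\<close> for \<open>i < k\<close>, leaving
  the median \<open>x k\<close> alone. The median lies metrically between the two points of every pair,
  so it minimises the sum of distances to that pair by the triangle inequality, and it trivially
  minimises the distance to itself, strictly unless the competitor is \<open>x k\<close>.\<close>

lemma sum_lessThan_odd_pairs: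
  fixes F :: "nat \<Rightarrow> 'b::comm_monoid_add"
  shows "(\<Sum>i<2*k+1. F i) = F k + (\<Sum>i<k. F i + F (2*k - i))"
proof -
  have split: "{..<2*k+1} = {..<k} \<union> {k} \<union> {k+1..2*k}" by auto
  have "(\<Sum>i<2*k+1. F i) = (\<Sum>i<k. F i) + F k + (\<Sum>i\<in>{k+1..2*k}. F i)"
    unfolding split by (subst sum.union_disjoint, auto simp: ac_simps)+
  moreover have "(\<Sum>i\<in>{k+1..2*k}. F i) = (\<Sum>i<k. F (2*k - i))"
    by (rule sum.reindex_bij_witness[where i="\<lambda>i. 2*k - i" and j="\<lambda>i. 2*k - i"]) auto
  ultimately show ?thesis by (simp add: sum.distrib ac_simps)
qed

lemma natural_orderE:
  assumes "natural_order x m"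
  obtains g where "\<And>a b. a \<in> x ` {..<m} \<Longrightarrow> b \<in> x ` {..<m} \<Longrightarrow> \<bar>g a - g b\<bar> = dist a b"
    and "\<And>i j. i < j \<Longrightarrow> j < m \<Longrightarrow> g (x i) < g (x j)"
  using assms that unfolding natural_order_def by (metis imageE)

lemma natural_order_inj_on:
  assumes "natural_order x m"
  shows "inj_on x {..<m}"
proof (rule inj_onI)
  obtain g where "\<And>a b. a \<in> x ` {..<m} \<Longrightarrow> b \<in> x ` {..<m} \<Longrightarrow> \<bar>g a - g b\<bar> = dist a b"
    and mono: "\<And>i j. i < j \<Longrightarrow> j < m \<Longrightarrow> g (x i) < g (x j)"
    by (rule natural_orderE[OF assms]) blast
  fix i j assume "i \<in> {..<m}" "j \<in> {..<m}" "x i = x j"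
  then have "\<not> i < j" "\<not> j < i"
    using mono[of i j] mono[of j i] by auto
  then show "i = j" by simp
qed

lemma natural_order_dist_add:
  assumes "natural_order x m" and "i < j" and "j < l" and "l < m"
  shows "dist (x i) (x j) + dist (x j) (x l) = dist (x i) (x l)"
proof -
  obtain g where iso: "\<And>a b. a \<in> x ` {..<m} \<Longrightarrow> b \<in> x ` {..<m} \<Longrightarrow> \<bar>g a - g b\<bar> = dist a b"
    and mono: "\<And>i j. i < j \<Longrightarrow> j < m \<Longrightarrow> g (x i) < g (x j)"
    by (rule natural_orderE[OF assms(1)]) blast
  have mem: "x i \<in> x ` {..<m}" "x j \<in> x ` {..<m}" "x l \<in> x ` {..<m}"
    using assms by auto
  have "g (x i) < g (x j)" "g (x j) < g (x l)"
    using mono[of i j] mono[of j l] assms by auto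
  then show ?thesis
    using iso[OF mem(1) mem(2)] iso[OF mem(2) mem(3)] iso[OF mem(1) mem(3)] by linarith
qed

lemma natural_order_median_sum_dist_le:
  assumes "natural_order x (2*k+1)"
  shows "(\<Sum>a\<in>x ` {..<2*k+1}. dist (x k) a) + dist z (x k) \<le> (\<Sum>a\<in>x ` {..<2*k+1}. dist z a)"
proof -
  have sum_pairs: "(\<Sum>a\<in>x ` {..<2*k+1}. dist y a)
      = dist y (x k) + (\<Sum>i<k. dist y (x i) + dist y (x (2*k - i)))" for y
    unfolding sum.reindex[OF natural_order_inj_on[OF assms]] o_def
    by (rule sum_lessThan_odd_pairs)
  have pair_le: "dist (x k) (x i) + dist (x k) (x (2*k - i)) \<le> dist z (x i) + dist z (x (2*k - i))"
    if "i < k" for i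
  proof -
    have "dist (x k) (x i) + dist (x k) (x (2*k - i)) = dist (x i) (x (2*k - i))"
      using natural_order_dist_add[OF assms, of i k "2*k - i"] that by (simp add: dist_commute)
    also have "\<dots> \<le> dist z (x i) + dist z (x (2*k - i))"
      by (metis dist_commute dist_triangle)
    finally show ?thesis .
  qed
  have "(\<Sum>i<k. dist (x k) (x i) + dist (x k) (x (2*k - i)))
      \<le> (\<Sum>i<k. dist z (x i) + dist z (x (2*k - i)))"
    by (rule sum_mono) (simp add: pair_le)
  then show ?thesis
    unfolding sum_pairs by (simp add: dist_commute)
qed

theorem corollary3p20:
  fixes x :: "nat \<Rightarrow> 'a::real_normed_vector" and k :: nat
  assumes "finite_dim_normed TYPE('a)"
    and "d_collinear (x ` {..<2*k+1})"
    and "natural_order x (2*k+1)"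
  shows "FT (x ` {..<2*k+1}) = {x k}"
proof -
  define D where "D z = (\<Sum>a\<in>x ` {..<2*k+1}. dist z a)" for z
  have median: "D (x k) + dist z (x k) \<le> D z" for z
    unfolding D_def by (rule natural_order_median_sum_dist_le[OF assms(3)])
  have FT_eq: "FT (x ` {..<2*k+1}) = {y. \<forall>z. D y \<le> D z}"
    unfolding FT_def D_def by (simp add: dist_norm)
  show ?thesis
  proof (intro equalityI subsetI)
    fix y assume "y \<in> FT (x ` {..<2*k+1})"
    then have "D y \<le> D (x k)" unfolding FT_eq by blast
    with median[of y] have "dist y (x k) \<le> 0" by linarith
    then show "y \<in> {x k}" by simp
  next
    fix y assume "y \<in> {x k}"
    moreover have "D (x k) \<le> D z" for z
      using median[of z] zero_le_dist[of z "x k"] by linarith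
    ultimately show "y \<in> FT (x ` {..<2*k+1})" unfolding FT_eq by simp
  qed
qed

end
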